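(* Let $\mathcal{H}\in\mathbb{R}_D^{[n_1,\ldots,n_m]}$. Then $\mathcal{H}$ is $\mathbb{R}$-psd if and only if $\mathcal{H}$ is $\mathbb{C}$-psd.
   Context: For vectors $v_i$, $[v_1,\ldots,v_m]_{\otimes h}:=v_1\otimes\cdots\otimes v_m\otimes\overline{v_1}\otimes\cdots\otimes\overline{v_m}$. $\mathbb{R}_D^{[n_1,\ldots,n_m]}$ is the set of real tensors of the form $\sum_i\lambda_i[u_i^1,\ldots,u_i^m]_{\otimes h}$ with $\lambda_i\in\mathbb{R}$ and $u_i^j\in\mathbb{R}^{n_j}$. For a Hermitian tensor $\mathcal{H}$ (i.e. $\mathcal{H}_{i_1\ldots i_m j_1\ldots j_m}=\overline{\mathcal{H}_{j_1\ldots j_m i_1\ldots i_m}}$) and $x=(x_1,\ldots,x_m)$, $\mathcal{H}(x,\overline{x}):=\langle\mathcal{H},[x_1,\ldots,x_m]_{\otimes h}\rangle$ with $\langle\mathcal{A},\mathcal{B}\rangle=\sum\mathcal{A}_{\cdot}\overline{\mathcal{B}_{\cdot}}$. $\mathcal{H}$ is $\mathbb{R}$-psd if $\mathcal{H}(x,\overline{x})\ge0$ for all real $x_i\in\mathbb{R}^{n_i}$, and $\mathbb{C}$-psd if $\mathcal{H}(x,\overline{x})\ge0$ for all complex $x_i\in\mathbb{C}^{n_i}$. *)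

theory Defs
  imports "HOL-Analysis.Analysis"
begin

text \<open>A multi-index (i_1,...,i_m) is a function i :: nat => nat in the extensional
  function space idx m n; a tensor is a function of two multi-indices
  (the first m and the last m indices). A vector tuple (x_1,...,x_m) is a function
  x :: nat => nat => 'a where x k is the vector x_{k+1} (only coordinates < n k matter).\<close>

definition idx :: "nat \<Rightarrow> (nat \<Rightarrow> nat) \<Rightarrow> (nat \<Rightarrow> nat) set" where
  "idx m n = (\<Pi>\<^sub>E k\<in>{..<m}. {..<n k})"

type_synonym tensor = "(nat \<Rightarrow> nat) \<Rightarrow> (nat \<Rightarrow> nat) \<Rightarrow> complex"

definition herm_outer :: "nat \<Rightarrow> (nat \<Rightarrow> nat \<Rightarrow> complex) \<Rightarrow> tensor" where
  "herm_outer m x = (\<lambda>i j. (\<Prod>k<m. x k (i k)) * (\<Prod>k<m. cnj (x k (j k))))"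

definition tinner :: "nat \<Rightarrow> (nat \<Rightarrow> nat) \<Rightarrow> tensor \<Rightarrow> tensor \<Rightarrow> complex" where
  "tinner m n A B = (\<Sum>i\<in>idx m n. \<Sum>j\<in>idx m n. A i j * cnj (B i j))"

definition hermitian_tensor :: "nat \<Rightarrow> (nat \<Rightarrow> nat) \<Rightarrow> tensor \<Rightarrow> bool" where
  "hermitian_tensor m n H \<longleftrightarrow> (\<forall>i\<in>idx m n. \<forall>j\<in>idx m n. H i j = cnj (H j i))"

definition herm_form :: "nat \<Rightarrow> (nat \<Rightarrow> nat) \<Rightarrow> tensor \<Rightarrow> (nat \<Rightarrow> nat \<Rightarrow> complex) \<Rightarrow> complex" where
  "herm_form m n H x = tinner m n H (herm_outer m x)"

definition RD :: "nat \<Rightarrow> (nat \<Rightarrow> nat) \<Rightarrow> tensor set" where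
  "RD m n = {H. \<exists>(r::nat) (lam::nat \<Rightarrow> real) (u::nat \<Rightarrow> nat \<Rightarrow> nat \<Rightarrow> real).
     \<forall>i\<in>idx m n. \<forall>j\<in>idx m n.
       H i j = (\<Sum>s<r. complex_of_real (lam s) *
                  herm_outer m (\<lambda>k a. complex_of_real (u s k a)) i j)}"

text \<open>"\<ge> 0" for a complex number: it is real and nonnegative.\<close>
definition R_psd :: "nat \<Rightarrow> (nat \<Rightarrow> nat) \<Rightarrow> tensor \<Rightarrow> bool" where
  "R_psd m n H \<longleftrightarrow> (\<forall>x::nat \<Rightarrow> nat \<Rightarrow> real.
     let v = herm_form m n H (\<lambda>k a. complex_of_real (x k a)) in Im v = 0 \<and> 0 \<le> Re v)"

definition C_psd :: "nat \<Rightarrow> (nat \<Rightarrow> nat) \<Rightarrow> tensor \<Rightarrow> bool" where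
  "C_psd m n H \<longleftrightarrow> (\<forall>x::nat \<Rightarrow> nat \<Rightarrow> complex.
     let v = herm_form m n H x in Im v = 0 \<and> 0 \<le> Re v)"

end

theory Submission
  imports Defs
begin

text \<open>For \<open>\<H> = \<Sum>\<^sub>s \<lambda>\<^sub>s [u\<^sub>s\<^sup>1,\<dots>,u\<^sub>s\<^sup>m]\<^sub>\<otimes>\<^sub>h\<close> one has
  \<open>\<H>(x,x\<^sup>*) = \<Sum>\<^sub>s \<lambda>\<^sub>s \<Prod>\<^sub>k |\<langle>u\<^sub>s\<^sup>k, x\<^sub>k\<rangle>|\<^sup>2\<close>.
  Since the \<open>u\<^sub>s\<^sup>k\<close> are real, \<open>|\<langle>u, y + i z\<rangle>|\<^sup>2 = \<langle>u, y\<rangle>\<^sup>2 + \<langle>u, z\<rangle>\<^sup>2\<close> for real \<open>y, z\<close>.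
  Expanding the product of these sums over all subsets \<open>S\<close> of the modes shows that
  \<open>\<H>(x,x\<^sup>*)\<close> is the sum of the \<open>2\<^sup>m\<close> values \<open>\<H>(w\<^sub>S,w\<^sub>S)\<close> at the real points
  \<open>w\<^sub>S\<close> taking \<open>Re x\<^sub>k\<close> for \<open>k \<in> S\<close> and \<open>Im x\<^sub>k\<close> otherwise; so \<open>\<real>\<close>-psd implies \<open>\<complex>\<close>-psd.\<close>

definition cinner :: "nat \<Rightarrow> (nat \<Rightarrow> complex) \<Rightarrow> (nat \<Rightarrow> complex) \<Rightarrow> complex" where
  "cinner N v x = (\<Sum>a<N. v a * cnj (x a))"

lemma sum_idx_prod:
  fixes f :: "nat \<Rightarrow> nat \<Rightarrow> 'a :: comm_semiring_1"
  shows "(\<Sum>i\<in>idx m n. \<Prod>k<m. f k (i k)) = (\<Prod>k<m. \<Sum>a<n k. f k a)"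
  unfolding idx_def by (rule prod_sum_PiE[of "{..<m}" "\<lambda>k. {..<n k}" f, symmetric]) auto

lemma tinner_herm_outer:
  "tinner m n (herm_outer m v) (herm_outer m x)
     = of_real (\<Prod>k<m. (cmod (cinner (n k) (v k) (x k)))\<^sup>2)"
proof -
  define P where "P = (\<Prod>k<m. cinner (n k) (v k) (x k))"
  have "tinner m n (herm_outer m v) (herm_outer m x)
      = (\<Sum>i\<in>idx m n. \<Prod>k<m. v k (i k) * cnj (x k (i k)))
        * (\<Sum>j\<in>idx m n. \<Prod>k<m. cnj (v k (j k) * cnj (x k (j k))))"
    by (simp add: tinner_def herm_outer_def sum_product prod.distrib ac_simps)
  also have "\<dots> = P * cnj P"
    using sum_idx_prod[where f="\<lambda>k a. v k a * cnj (x k a)"]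
      sum_idx_prod[where f="\<lambda>k a. cnj (v k a * cnj (x k a))"]
    by (simp add: P_def cinner_def cnj_sum cnj_prod)
  also have "\<dots> = of_real (\<Prod>k<m. (cmod (cinner (n k) (v k) (x k)))\<^sup>2)"
    by (simp add: P_def cnj_prod prod.distrib[symmetric] complex_norm_square[symmetric])
  finally show ?thesis .
qed

lemma tinner_sum_left:
  assumes "\<forall>i\<in>idx m n. \<forall>j\<in>idx m n. H i j = (\<Sum>s<r. c s * A s i j)"
  shows "tinner m n H B = (\<Sum>s<r. c s * tinner m n (A s) B)"
  using assms
  by (simp add: tinner_def sum_distrib_left sum_distrib_right mult.assoc
      sum.swap[of _ "{..<r}"] cong: sum.cong)

lemma herm_form_rank_one_sum:
  assumes "\<forall>i\<in>idx m n. \<forall>j\<in>idx m n. H i j = (\<Sum>s<r. c s * herm_outer m (v s) i j)"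
  shows "herm_form m n H x
           = (\<Sum>s<r. c s * of_real (\<Prod>k<m. (cmod (cinner (n k) (v s k) (x k)))\<^sup>2))"
  using tinner_sum_left[OF assms] by (simp add: herm_form_def tinner_herm_outer)

lemma cmod_cinner_real_Re_Im:
  "(cmod (cinner N (\<lambda>a. of_real (u a)) x))\<^sup>2
     = (cmod (cinner N (\<lambda>a. of_real (u a)) (\<lambda>a. of_real (Re (x a)))))\<^sup>2
       + (cmod (cinner N (\<lambda>a. of_real (u a)) (\<lambda>a. of_real (Im (x a)))))\<^sup>2"
proof -
  have "cinner N (\<lambda>a. of_real (u a)) x
          = Complex (\<Sum>a<N. u a * Re (x a)) (- (\<Sum>a<N. u a * Im (x a)))"
    by (simp add: complex_eq_iff cinner_def Re_sum Im_sum sum_negf)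
  moreover have "cinner N (\<lambda>a. of_real (u a)) (\<lambda>a. of_real (f a)) = of_real (\<Sum>a<N. u a * f a)"
    for f
    by (simp add: cinner_def)
  ultimately show ?thesis
    by (simp add: cmod_power2)
qed

lemma prod_add_eq_sum_Pow:
  fixes f g :: "'a \<Rightarrow> 'b :: comm_semiring_1"
  assumes "finite A"
  shows "(\<Prod>k\<in>A. f k + g k) = (\<Sum>S\<in>Pow A. \<Prod>k\<in>A. if k \<in> S then f k else g k)"
  using assms
  by (auto simp: prod_add prod.If_cases Int_absorb1 Diff_eq intro!: sum.cong)

definition re_im_split :: "nat set \<Rightarrow> (nat \<Rightarrow> nat \<Rightarrow> complex) \<Rightarrow> nat \<Rightarrow> nat \<Rightarrow> real" where
  "re_im_split S x k a = (if k \<in> S then Re (x k a) else Im (x k a))"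

lemma herm_form_RD_eq_sum_re_im_split:
  assumes "H \<in> RD m n"
  shows "herm_form m n H x
           = (\<Sum>S\<in>Pow {..<m}. herm_form m n H (\<lambda>k a. of_real (re_im_split S x k a)))"
proof -
  from assms obtain r lam and u :: "nat \<Rightarrow> nat \<Rightarrow> nat \<Rightarrow> real"
    where H: "\<forall>i\<in>idx m n. \<forall>j\<in>idx m n. H i j = (\<Sum>s<r. of_real (lam s)
                 * herm_outer m (\<lambda>k a. of_real (u s k a)) i j)"
    unfolding RD_def by blast
  define q where "q s k y = (cmod (cinner (n k) (\<lambda>a. of_real (u s k a)) y))\<^sup>2" for s k y
  define w where "w S = (\<lambda>k a. complex_of_real (re_im_split S x k a))" for S
  have expand: "herm_form m n H y = of_real (\<Sum>s<r. lam s * (\<Prod>k<m. q s k (y k)))" for y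
    using herm_form_rank_one_sum[OF H, of y] by (simp add: q_def)
  have prod_split: "(\<Prod>k<m. q s k (x k)) = (\<Sum>S\<in>Pow {..<m}. \<Prod>k<m. q s k (w S k))" for s
  proof -
    have "(\<Prod>k<m. q s k (x k)) = (\<Prod>k<m. q s k (\<lambda>a. of_real (Re (x k a)))
                                          + q s k (\<lambda>a. of_real (Im (x k a))))"
      \<comment> \<open>not by simp: the lemma's right-hand side matches its left-hand side again\<close>
      unfolding q_def by (intro prod.cong refl cmod_cinner_real_Re_Im)
    also have "\<dots> = (\<Sum>S\<in>Pow {..<m}. \<Prod>k<m. if k \<in> S then q s k (\<lambda>a. of_real (Re (x k a)))
                                                   else q s k (\<lambda>a. of_real (Im (x k a))))"
      by (rule prod_add_eq_sum_Pow) simp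
    also have "\<dots> = (\<Sum>S\<in>Pow {..<m}. \<Prod>k<m. q s k (w S k))"
      by (intro sum.cong prod.cong refl) (simp add: w_def re_im_split_def)
    finally show ?thesis .
  qed
  have "herm_form m n H x = of_real (\<Sum>s<r. \<Sum>S\<in>Pow {..<m}. lam s * (\<Prod>k<m. q s k (w S k)))"
    by (simp only: expand prod_split sum_distrib_left)
  also have "\<dots> = (\<Sum>S\<in>Pow {..<m}. herm_form m n H (w S))"
    unfolding expand of_real_sum by (rule sum.swap)
  finally show ?thesis unfolding w_def .
qed

theorem proposition5p3:
  fixes m :: nat and n :: "nat \<Rightarrow> nat" and H :: tensor
  assumes "H \<in> RD m n"
  shows "R_psd m n H \<longleftrightarrow> C_psd m n H"
proof
  assume "C_psd m n H"
  then show "R_psd m n H" unfolding C_psd_def R_psd_def by blast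
next
  assume R: "R_psd m n H"
  show "C_psd m n H"
    unfolding C_psd_def Let_def
  proof (intro allI)
    fix x
    note R[unfolded R_psd_def Let_def, rule_format, of "re_im_split _ x"]
    then show "Im (herm_form m n H x) = 0 \<and> 0 \<le> Re (herm_form m n H x)"
      unfolding herm_form_RD_eq_sum_re_im_split[OF assms, of x]
      by (simp add: Re_sum Im_sum sum_nonneg)
  qed
qed

end
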